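(* Let $S$ be a monoid and $A$ an $S$-act. Then for every $n\in\mathbb N$ the $S$-act $A(n)$ is $n$-absolutely pure, and $A(\aleph_0)$ is absolutely pure. Further, $A$ is $n$-absolutely pure if and only if $A$ is a retract of $A(n)$, and $A$ is absolutely pure if and only if $A$ is a retract of $A(\aleph_0)$.
   Context: A (right) $S$-act is a set with an action $(a,s)\mapsto as$ with $a1=a$, $a(st)=(as)t$. Equations over $A$ have the forms $xs=yt$, $xs=xt$, $xs=a$ ($a\in A$); a set of them is consistent if it has a solution in some $S$-act containing $A$. $A$ is $n$-absolutely pure if every finite consistent set of equations over $A$ in at most $n$ variables has a solution in $A$; absolutely pure if this holds for all $n$; a retract of $B\supseteq A$ if some $S$-morphism $B\to A$ fixes $A$ pointwise. For a set $\Sigma$ of equations, $v(\Sigma)$ is the number of variables occurring, $H(\Sigma)=\{(xu,yv):xu=yv\in\Sigma\}$, $K(\Sigma)=\{(xs,a):xs=a\in\Sigma\}$. For any $S$-act $C$: let $\Theta(C,m)$ be all finite consistent sets $\Sigma$ over $C$ with $v(\Sigma)=m$, with variables chosen so that distinct sets (and distinct stages of the construction below) use pairwise disjoint, fresh variables; $\Omega_n$ is the set of variables of members of $\bigcup_{m\le n}\Theta(C,m)$, $\Omega_{\aleph_0}=\bigcup_n\Omega_n$; $C^n_1=(C\sqcup F_S(\Omega_n))/\kappa(n)$ where $\kappa(n)$ is generated by $\bigcup\{H(\Sigma)\cup K(\Sigma):\Sigma\in\Theta(C,m),m\le n\}$, and $C^{\aleph_0}_1$ is defined likewise using all $m$;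 $C$ embeds in these via $c\mapsto[c]$. Now set $A^n_0=A^{\aleph_0}_0=A$, $A^n_i=(A^n_{i-1})^n_1$ and $A^{\aleph_0}_i=(A^{\aleph_0}_{i-1})^{\aleph_0}_1$ for $i\ge1$, and $A(n)=\bigcup_{i}A^n_i$, $A(\aleph_0)=\bigcup_iA^{\aleph_0}_i$ (unions of chains of embeddings, so $A\subseteq A(n)$, $A\subseteq A(\aleph_0)$). *)

theory Defs
  imports Main "HOL-Library.FSet"
begin

definition is_act :: "'c set \<Rightarrow> ('c \<Rightarrow> 's::monoid_mult \<Rightarrow> 'c) \<Rightarrow> bool" where
  "is_act X act \<longleftrightarrow> (\<forall>a\<in>X. \<forall>s. act a s \<in> X) \<and> (\<forall>a\<in>X. act a 1 = a)
     \<and> (\<forall>a\<in>X. \<forall>s t. act a (s * t) = act (act a s) t)"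

definition is_morph :: "'c set \<Rightarrow> ('c \<Rightarrow> 's::monoid_mult \<Rightarrow> 'c) \<Rightarrow> 'b set \<Rightarrow> ('b \<Rightarrow> 's \<Rightarrow> 'b)
    \<Rightarrow> ('c \<Rightarrow> 'b) \<Rightarrow> bool" where
  "is_morph X act Y actY f \<longleftrightarrow> (\<forall>a\<in>X. f a \<in> Y) \<and> (\<forall>a\<in>X. \<forall>s. f (act a s) = actY (f a) s)"

text \<open>EqVV x s y t is the equation x s = y t (with x = y allowed, giving x s = x t);
  EqVC x s a is the equation x s = a.\<close>
datatype ('c, 's) eqn = EqVV nat 's nat 's | EqVC nat 's 'c

fun eqn_vars :: "('c, 's) eqn \<Rightarrow> nat set" where
  "eqn_vars (EqVV x s y t) = {x, y}"
| "eqn_vars (EqVC x s a) = {x}"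

fun eqn_consts :: "('c, 's) eqn \<Rightarrow> 'c set" where
  "eqn_consts (EqVV x s y t) = {}"
| "eqn_consts (EqVC x s a) = {a}"

fun eqn_map :: "('c \<Rightarrow> 'd) \<Rightarrow> ('c, 's) eqn \<Rightarrow> ('d, 's) eqn" where
  "eqn_map f (EqVV x s y t) = EqVV x s y t"
| "eqn_map f (EqVC x s a) = EqVC x s (f a)"

definition nvars :: "('c, 's) eqn fset \<Rightarrow> nat" where
  "nvars \<Sigma> = card (\<Union>e\<in>fset \<Sigma>. eqn_vars e)"

definition over :: "'c set \<Rightarrow> ('c, 's) eqn fset \<Rightarrow> bool" where
  "over X \<Sigma> \<longleftrightarrow> (\<forall>e\<in>fset \<Sigma>. eqn_consts e \<subseteq> X)"

definition solves :: "('b \<Rightarrow> 's::monoid_mult \<Rightarrow> 'b) \<Rightarrow> ('c \<Rightarrow> 'b) \<Rightarrow> (nat \<Rightarrow> 'b)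
    \<Rightarrow> ('c, 's) eqn fset \<Rightarrow> bool" where
  "solves actB f \<sigma> \<Sigma> \<longleftrightarrow> (\<forall>e\<in>fset \<Sigma>. case e of
       EqVV x s y t \<Rightarrow> actB (\<sigma> x) s = actB (\<sigma> y) t
     | EqVC x s a \<Rightarrow> actB (\<sigma> x) s = f a)"

text \<open>The witnessing act is taken with carrier in the type 'c + nat * 's, which is
  no loss of generality: the subact generated by the image of X and the values of a solution
  has at most |X| + |nat x S| elements.\<close>
definition consistent :: "'c set \<Rightarrow> ('c \<Rightarrow> 's::monoid_mult \<Rightarrow> 'c) \<Rightarrow> ('c, 's) eqn fset \<Rightarrow> bool" where
  "consistent X act \<Sigma> \<longleftrightarrow>
     (\<exists>(B :: ('c + nat \<times> 's) set) actB f \<sigma>. is_act B actB \<and> is_morph X act B actB f \<and> inj_on f X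
        \<and> (\<forall>k\<in>(\<Union>e\<in>fset \<Sigma>. eqn_vars e). \<sigma> k \<in> B) \<and> solves actB f \<sigma> \<Sigma>)"

definition n_abs_pure :: "nat \<Rightarrow> 'c set \<Rightarrow> ('c \<Rightarrow> 's::monoid_mult \<Rightarrow> 'c) \<Rightarrow> bool" where
  "n_abs_pure n X act \<longleftrightarrow> (\<forall>\<Sigma>. over X \<Sigma> \<and> nvars \<Sigma> \<le> n \<and> consistent X act \<Sigma>
       \<longrightarrow> (\<exists>\<sigma>. (\<forall>k\<in>(\<Union>e\<in>fset \<Sigma>. eqn_vars e). \<sigma> k \<in> X) \<and> solves act id \<sigma> \<Sigma>))"

definition abs_pure :: "'c set \<Rightarrow> ('c \<Rightarrow> 's::monoid_mult \<Rightarrow> 'c) \<Rightarrow> bool" where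
  "abs_pure X act \<longleftrightarrow> (\<forall>n. n_abs_pure n X act)"

definition is_retract :: "'c set \<Rightarrow> ('c \<Rightarrow> 's::monoid_mult \<Rightarrow> 'c) \<Rightarrow> 'b set \<Rightarrow> ('b \<Rightarrow> 's \<Rightarrow> 'b)
    \<Rightarrow> ('c \<Rightarrow> 'b) \<Rightarrow> bool" where
  "is_retract X act Y actY emb \<longleftrightarrow> (\<exists>g. is_morph Y actY X act g \<and> (\<forall>a\<in>X. g (emb a) = a))"

text \<open>Raw elements: Base a for a in A, and Gen i T k s, the element (x s) of the free act on the
  fresh variable x which is variable k of the system T at stage i.  T is the system over the
  previous stage with constants replaced by chosen representatives of their classes.\<close>
datatype ('a, 's) elt = Base 'a | Gen nat "(('a, 's) elt, 's) eqn fset" nat 's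

fun ract :: "('a \<Rightarrow> 's::monoid_mult \<Rightarrow> 'a) \<Rightarrow> ('a, 's) elt \<Rightarrow> 's \<Rightarrow> ('a, 's) elt" where
  "ract act (Base a) s = Base (act a s)"
| "ract act (Gen i T k u) s = Gen i T k (u * s)"

inductive_set congr :: "'b set \<Rightarrow> ('b \<Rightarrow> 's \<Rightarrow> 'b) \<Rightarrow> 'b rel \<Rightarrow> 'b rel"
  for D f R where
  gen: "(x, y) \<in> R \<Longrightarrow> (x, y) \<in> congr D f R"
| refl: "x \<in> D \<Longrightarrow> (x, x) \<in> congr D f R"
| sym: "(x, y) \<in> congr D f R \<Longrightarrow> (y, x) \<in> congr D f R"
| trans: "(x, y) \<in> congr D f R \<Longrightarrow> (y, z) \<in> congr D f R \<Longrightarrow> (x, z) \<in> congr D f R"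
| compat: "(x, y) \<in> congr D f R \<Longrightarrow> (f x s, f y s) \<in> congr D f R"

definition qact :: "'b rel \<Rightarrow> ('b \<Rightarrow> 's \<Rightarrow> 'b) \<Rightarrow> 'b set \<Rightarrow> 's \<Rightarrow> 'b set" where
  "qact E f X s = E `` ((\<lambda>x. f x s) ` X)"

definition rep :: "'b set \<Rightarrow> 'b" where
  "rep X = (SOME x. x \<in> X)"

definition tag :: "('b set, 's) eqn fset \<Rightarrow> ('b, 's) eqn fset" where
  "tag \<Sigma> = fimage (eqn_map rep) \<Sigma>"

text \<open>Stage i of the construction, represented as a set D of raw elements together with a
  congruence E; the act A_i is D // E.  P selects the admissible numbers of variables
  (P m = (m \<le> n) for A(n), P m = True for A(aleph_0)).  Stage i+1 is
  (C \<squnion> F_S(Omega))/kappa with C = D // E, realized as (D \<union> new generators) modulo the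
  congruence generated by E, H(Sigma), K(Sigma).\<close>
fun stage :: "(nat \<Rightarrow> bool) \<Rightarrow> 'a set \<Rightarrow> ('a \<Rightarrow> 's::monoid_mult \<Rightarrow> 'a) \<Rightarrow> nat
    \<Rightarrow> ('a, 's) elt set \<times> ('a, 's) elt rel" where
  "stage P A act 0 = (Base ` A, Id_on (Base ` A))"
| "stage P A act (Suc i) =
    (let D = fst (stage P A act i); E = snd (stage P A act i);
         C = D // E;
         Th = {\<Sigma>. over C \<Sigma> \<and> consistent C (qact E (ract act)) \<Sigma> \<and> P (nvars \<Sigma>)};
         N = {Gen (Suc i) (tag \<Sigma>) k s | \<Sigma> k s. \<Sigma> \<in> Th \<and> k \<in> (\<Union>e\<in>fset \<Sigma>. eqn_vars e)};
         H = {(Gen (Suc i) (tag \<Sigma>) x u, Gen (Suc i) (tag \<Sigma>) y v) | \<Sigma> x u y v.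
                \<Sigma> \<in> Th \<and> EqVV x u y v \<in> fset \<Sigma>};
         K = {(Gen (Suc i) (tag \<Sigma>) x s, rep a) | \<Sigma> x s a. \<Sigma> \<in> Th \<and> EqVC x s a \<in> fset \<Sigma>}
     in (D \<union> N, congr (D \<union> N) (ract act) (E \<union> H \<union> K)))"

definition ext_rel :: "(nat \<Rightarrow> bool) \<Rightarrow> 'a set \<Rightarrow> ('a \<Rightarrow> 's::monoid_mult \<Rightarrow> 'a) \<Rightarrow> ('a, 's) elt rel" where
  "ext_rel P A act = (\<Union>i. snd (stage P A act i))"

definition ext_carrier :: "(nat \<Rightarrow> bool) \<Rightarrow> 'a set \<Rightarrow> ('a \<Rightarrow> 's::monoid_mult \<Rightarrow> 'a)
    \<Rightarrow> ('a, 's) elt set set" where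
  "ext_carrier P A act = (\<Union>i. fst (stage P A act i)) // ext_rel P A act"

definition ext_act :: "(nat \<Rightarrow> bool) \<Rightarrow> 'a set \<Rightarrow> ('a \<Rightarrow> 's::monoid_mult \<Rightarrow> 'a)
    \<Rightarrow> ('a, 's) elt set \<Rightarrow> 's \<Rightarrow> ('a, 's) elt set" where
  "ext_act P A act = qact (ext_rel P A act) (ract act)"

definition ext_emb :: "(nat \<Rightarrow> bool) \<Rightarrow> 'a set \<Rightarrow> ('a \<Rightarrow> 's::monoid_mult \<Rightarrow> 'a)
    \<Rightarrow> 'a \<Rightarrow> ('a, 's) elt set" where
  "ext_emb P A act a = ext_rel P A act `` {Base a}"

abbreviation "An_carrier n \<equiv> ext_carrier (\<lambda>m. m \<le> n)"
abbreviation "An_act n \<equiv> ext_act (\<lambda>m. m \<le> n)"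
abbreviation "An_emb n \<equiv> ext_emb (\<lambda>m. m \<le> n)"
abbreviation "Aw_carrier \<equiv> ext_carrier (\<lambda>m. True)"
abbreviation "Aw_act \<equiv> ext_act (\<lambda>m. True)"
abbreviation "Aw_emb \<equiv> ext_emb (\<lambda>m. True)"

end

theory Submission
  imports Defs
begin

text \<open>A(P) stands for A(n) or A(\<aleph>0), P restricting the number of variables of the
  systems considered.  Stage i + 1 adjoins to stage i, for every admissible finite consistent
  system over it, fresh generators subject exactly to the equations of that system. All
  systems over one stage can be solved simultaneously in a single extension of it (glue the
  witnessing extensions along the stage), so the new relations identify nothing in the old
  stage and A embeds in A(P). A system over A(P) has its finitely many constants in some
  stage, where it is still consistent, hence it is solved by generators of the next stage:
  A(P) is P-pure. If A is P-pure, a retraction A(P) \<rightarrow> A is built stage by stage,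
  sending each new generator to a solution in A of its system transported along the retraction
  built so far; conversely a system consistent over a retract A of a P-pure act stays
  consistent over the big act, and a solution there is pushed back to A by the retraction.\<close>

section \<open>Acts and systems of equations\<close>

lemma is_actD:
  assumes "is_act X act" "a \<in> X"
  shows "act a s \<in> X" "act a 1 = a" "act a (s * t) = act (act a s) t"
  using assms by (auto simp: is_act_def)

lemma is_morphD:
  assumes "is_morph X act Y actY f" "a \<in> X"
  shows "f a \<in> Y" "f (act a s) = actY (f a) s"
  using assms by (auto simp: is_morph_def)

lemma is_morph_comp:
  "is_morph X actX Y actY f \<Longrightarrow> is_morph Y actY Z actZ g \<Longrightarrow> is_morph X actX Z actZ (g \<circ> f)"
  by (auto simp: is_morph_def)

lemma is_act_subset:
  assumes "is_act M act" "G \<subseteq> M" "\<And>a s. a \<in> G \<Longrightarrow> act a s \<in> G"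
  shows "is_act G act"
  using assms by (auto simp: is_act_def)

lemma is_act_transport:
  assumes "is_act G act" "inj_on enc G"
  shows "is_act (enc ` G) (\<lambda>b s. enc (act (inv_into G enc b) s))"
    and "is_morph G act (enc ` G) (\<lambda>b s. enc (act (inv_into G enc b) s)) enc"
proof -
  have "\<And>x. x \<in> G \<Longrightarrow> inv_into G enc (enc x) = x" using assms(2) by simp
  then show "is_act (enc ` G) (\<lambda>b s. enc (act (inv_into G enc b) s))"
    and "is_morph G act (enc ` G) (\<lambda>b s. enc (act (inv_into G enc b) s)) enc"
    using assms(1) by (auto simp: is_act_def is_morph_def)
qed

abbreviation vars_of :: "('c, 's) eqn fset \<Rightarrow> nat set" where
  "vars_of \<Sigma> \<equiv> \<Union>e\<in>fset \<Sigma>. eqn_vars e"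

lemma solves_iff:
  "solves actB f \<sigma> \<Sigma> \<longleftrightarrow>
     (\<forall>x s y t. EqVV x s y t \<in> fset \<Sigma> \<longrightarrow> actB (\<sigma> x) s = actB (\<sigma> y) t) \<and>
     (\<forall>x s a. EqVC x s a \<in> fset \<Sigma> \<longrightarrow> actB (\<sigma> x) s = f a)"
  unfolding solves_def by (auto split: eqn.splits)

lemma EqVV_vars: "EqVV x s y t \<in> fset \<Sigma> \<Longrightarrow> x \<in> vars_of \<Sigma> \<and> y \<in> vars_of \<Sigma>"
  by force

lemma EqVC_vars: "EqVC x s a \<in> fset \<Sigma> \<Longrightarrow> x \<in> vars_of \<Sigma>"
  by force

lemma over_EqVC: "over X \<Sigma> \<Longrightarrow> EqVC x s a \<in> fset \<Sigma> \<Longrightarrow> a \<in> X"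
  unfolding over_def by fastforce

lemma finite_eqn_consts [simp]: "finite (eqn_consts e)"
  by (cases e) auto

lemma eqn_vars_map [simp]: "eqn_vars (eqn_map \<phi> e) = eqn_vars e"
  by (cases e) auto

lemma eqn_consts_map [simp]: "eqn_consts (eqn_map \<phi> e) = \<phi> ` eqn_consts e"
  by (cases e) auto

lemma vars_of_map [simp]: "vars_of (fimage (eqn_map \<phi>) \<Sigma>) = vars_of \<Sigma>"
  by simp

lemma nvars_map [simp]: "nvars (fimage (eqn_map \<phi>) \<Sigma>) = nvars \<Sigma>"
  unfolding nvars_def by simp

lemma over_map: "over X (fimage (eqn_map \<phi>) \<Sigma>) \<longleftrightarrow> (\<forall>e\<in>fset \<Sigma>. \<phi> ` eqn_consts e \<subseteq> X)"
  by (simp add: over_def)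

lemma fimage_eqn_map_comp: "fimage (eqn_map f) (fimage (eqn_map g) \<Sigma>) = fimage (eqn_map (f \<circ> g)) \<Sigma>"
proof -
  have "eqn_map f (eqn_map g e) = eqn_map (f \<circ> g) e" for e
    by (cases e) auto
  then show ?thesis unfolding fimage_fimage by (intro fimage_cong) simp_all
qed

lemma fimage_eqn_map_id:
  assumes "\<And>e a. e \<in> fset \<Sigma> \<Longrightarrow> a \<in> eqn_consts e \<Longrightarrow> f a = a"
  shows "fimage (eqn_map f) \<Sigma> = \<Sigma>"
proof -
  have "eqn_map f e = e" if "e \<in> fset \<Sigma>" for e
    using assms[OF that] by (cases e) auto
  then have "fimage (eqn_map f) \<Sigma> = fimage (\<lambda>e. e) \<Sigma>"
    by (intro fimage_cong) simp_all
  then show ?thesis by simp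
qed

lemma EqVV_in_map: "EqVV x s y t \<in> fset (fimage (eqn_map \<phi>) \<Sigma>) \<longleftrightarrow> EqVV x s y t \<in> fset \<Sigma>"
proof -
  have "EqVV x s y t = eqn_map \<phi> e \<longleftrightarrow> e = EqVV x s y t" for e by (cases e) auto
  then show ?thesis by (simp add: fimage.rep_eq image_iff)
qed

lemma EqVC_in_map:
  "EqVC x s c \<in> fset (fimage (eqn_map \<phi>) \<Sigma>) \<longleftrightarrow> (\<exists>a. c = \<phi> a \<and> EqVC x s a \<in> fset \<Sigma>)"
proof -
  have "EqVC x s c = eqn_map \<phi> e \<longleftrightarrow> (\<exists>a. c = \<phi> a \<and> e = EqVC x s a)" for e by (cases e) auto
  then show ?thesis by (auto simp: fimage.rep_eq image_iff)
qed

lemma solves_map: "solves actB F \<sigma> (fimage (eqn_map \<phi>) \<Sigma>) \<longleftrightarrow> solves actB (F \<circ> \<phi>) \<sigma> \<Sigma>"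
  unfolding solves_iff EqVV_in_map EqVC_in_map comp_def by blast

lemma solves_cong:
  assumes "\<And>e a. e \<in> fset \<Sigma> \<Longrightarrow> a \<in> eqn_consts e \<Longrightarrow> F a = F' a"
  shows "solves actB F \<sigma> \<Sigma> \<longleftrightarrow> solves actB F' \<sigma> \<Sigma>"
proof -
  have "F a = F' a" if "EqVC x s a \<in> fset \<Sigma>" for x s a
    using assms[OF that] by simp
  then show ?thesis unfolding solves_iff by auto
qed

lemma solves_morph:
  assumes "is_morph Y actY X actX g" "\<forall>k\<in>vars_of \<Sigma>. \<sigma> k \<in> Y" "solves actY F \<sigma> \<Sigma>"
  shows "solves actX (g \<circ> F) (g \<circ> \<sigma>) \<Sigma>"
  unfolding solves_iff
proof (intro conjI allI impI)
  fix x s y t assume e: "EqVV x s y t \<in> fset \<Sigma>"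
  then have "\<sigma> x \<in> Y" "\<sigma> y \<in> Y" using assms(2) EqVV_vars[OF e] by auto
  moreover have "actY (\<sigma> x) s = actY (\<sigma> y) t" using assms(3) e by (simp add: solves_iff)
  ultimately show "actX ((g \<circ> \<sigma>) x) s = actX ((g \<circ> \<sigma>) y) t"
    using is_morphD(2)[OF assms(1), symmetric] by simp
next
  fix x s a assume e: "EqVC x s a \<in> fset \<Sigma>"
  then have "\<sigma> x \<in> Y" using assms(2) EqVC_vars[OF e] by auto
  moreover have "actY (\<sigma> x) s = F a" using assms(3) e by (simp add: solves_iff)
  ultimately show "actX ((g \<circ> \<sigma>) x) s = (g \<circ> F) a"
    using is_morphD(2)[OF assms(1), symmetric] by simp
qed

section \<open>Consistency and amalgamation\<close>

lemma inj_on_if_Inl_Inr: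
  assumes "inj_on f A" "inj_on g B"
  shows "inj_on (\<lambda>y. if y \<in> A then Inl (f y) else Inr (g y)) (A \<union> B)"
  using assms by (auto simp: inj_on_def)

text \<open>Any act containing X in which the system is solvable witnesses consistency: the subact
  generated by h ` X and the values of \<sigma> embeds into the type 'c + nat \<times> 's fixed in the
  definition of consistency.\<close>
lemma consistentI:
  fixes X :: "'c set" and act :: "'c \<Rightarrow> 's::monoid_mult \<Rightarrow> 'c" and M :: "'m set"
  assumes "is_act X act" "is_act M actM" "is_morph X act M actM h" "inj_on h X"
    and "\<forall>k\<in>vars_of \<Sigma>. \<sigma> k \<in> M" "solves actM h \<sigma> \<Sigma>"
  shows "consistent X act \<Sigma>"
proof -
  define gen where "gen = (\<lambda>(k, s). actM (\<sigma> k) s)"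
  define G where "G = h ` X \<union> gen ` (vars_of \<Sigma> \<times> UNIV)"
  define enc :: "'m \<Rightarrow> 'c + nat \<times> 's" where
    "enc y = (if y \<in> h ` X then Inl (inv_into X h y) else Inr (inv_into (vars_of \<Sigma> \<times> UNIV) gen y))"
    for y
  have \<sigma>_M: "\<sigma> k \<in> M" if "k \<in> vars_of \<Sigma>" for k
    using assms(5) that by auto
  have G_act: "is_act G actM"
  proof (rule is_act_subset[OF assms(2)])
    show "G \<subseteq> M"
      using assms(3) by (auto simp: G_def gen_def is_morphD intro!: is_actD(1)[OF assms(2)] \<sigma>_M)
    show "actM a s \<in> G" if aG: "a \<in> G" for a s
    proof (cases "a \<in> h ` X")
      case True
      then obtain x where "x \<in> X" "a = h x" by blast
      then have "actM a s = h (act x s)" "act x s \<in> X"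
        using assms(1,3) by (simp_all add: is_morphD is_actD)
      then show ?thesis by (simp add: G_def)
    next
      case False
      then obtain k u where k: "k \<in> vars_of \<Sigma>" and a: "a = gen (k, u)"
        using aG by (auto simp: G_def)
      then have "actM a s = gen (k, u * s)"
        using is_actD(3)[OF assms(2) \<sigma>_M] by (simp add: gen_def)
      then show ?thesis using k by (simp add: G_def rev_image_eqI)
    qed
  qed
  have h_G: "is_morph X act G actM h"
    using assms(3) by (auto simp: is_morph_def G_def)
  have \<sigma>_G: "\<forall>k\<in>vars_of \<Sigma>. \<sigma> k \<in> G"
  proof
    fix k assume k: "k \<in> vars_of \<Sigma>"
    then have "gen (k, 1) \<in> G" by (auto simp: G_def)
    then show "\<sigma> k \<in> G" using is_actD(2)[OF assms(2) \<sigma>_M[OF k]] by (simp add: gen_def)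
  qed
  have enc_inj: "inj_on enc G"
    unfolding enc_def G_def by (intro inj_on_if_Inl_Inr inj_on_inv_into) auto
  define actB where "actB = (\<lambda>b s. enc (actM (inv_into G enc b) s))"
  have "is_act (enc ` G) actB" "is_morph G actM (enc ` G) actB enc"
    using is_act_transport[OF G_act enc_inj] by (simp_all add: actB_def)
  moreover have "inj_on (enc \<circ> h) X"
    using assms(4) enc_inj h_G by (auto simp: inj_on_def is_morph_def)
  moreover have "solves actB (enc \<circ> h) (enc \<circ> \<sigma>) \<Sigma>"
    using solves_morph[OF calculation(2) \<sigma>_G assms(6)] .
  ultimately show ?thesis
    unfolding consistent_def using is_morph_comp[OF h_G] \<sigma>_G
    by (intro exI[of _ "enc ` G"] exI[of _ actB] exI[of _ "enc \<circ> h"] exI[of _ "enc \<circ> \<sigma>"]) auto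
qed

lemma consistentE:
  fixes X :: "'c set" and act :: "'c \<Rightarrow> 's::monoid_mult \<Rightarrow> 'c"
  assumes "consistent X act \<Sigma>"
  obtains B :: "('c + nat \<times> 's) set" and actB f \<sigma>
  where "is_act B actB" "is_morph X act B actB f" "inj_on f X"
    "\<forall>k\<in>vars_of \<Sigma>. \<sigma> k \<in> B" "solves actB f \<sigma> \<Sigma>"
  using assms unfolding consistent_def by (elim exE conjE) (rule that)

text \<open>The amalgam of X with acts B j that contain C via injective morphisms f j, along
  g : C \<rightarrow> X: each copy f j ` C is identified with its image under g, the rest of each B j is
  kept apart.\<close>

definition amalgam_emb :: "'c set \<Rightarrow> ('c \<Rightarrow> 'x) \<Rightarrow> ('j \<Rightarrow> 'c \<Rightarrow> 'b) \<Rightarrow> 'j \<Rightarrow> 'b \<Rightarrow> 'x + 'j \<times> 'b" where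
  "amalgam_emb C g f j b = (if b \<in> f j ` C then Inl (g (inv_into C (f j) b)) else Inr (j, b))"

definition amalgam_act :: "'c set \<Rightarrow> ('c \<Rightarrow> 'x) \<Rightarrow> ('j \<Rightarrow> 'c \<Rightarrow> 'b) \<Rightarrow> ('x \<Rightarrow> 's \<Rightarrow> 'x)
    \<Rightarrow> ('j \<Rightarrow> 'b \<Rightarrow> 's \<Rightarrow> 'b) \<Rightarrow> 'x + 'j \<times> 'b \<Rightarrow> 's \<Rightarrow> 'x + 'j \<times> 'b" where
  "amalgam_act C g f actX actB m s = (case m of
       Inl x \<Rightarrow> Inl (actX x s)
     | Inr (j, b) \<Rightarrow> amalgam_emb C g f j (actB j b s))"

definition amalgam_carrier :: "'c set \<Rightarrow> ('j \<Rightarrow> 'c \<Rightarrow> 'b) \<Rightarrow> 'x set \<Rightarrow> 'j set \<Rightarrow> ('j \<Rightarrow> 'b set)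
    \<Rightarrow> ('x + 'j \<times> 'b) set" where
  "amalgam_carrier C f X J B = Inl ` X \<union> {Inr (j, b) | j b. j \<in> J \<and> b \<in> B j \<and> b \<notin> f j ` C}"

locale amalgam =
  fixes C :: "'c set" and actC :: "'c \<Rightarrow> 's::monoid_mult \<Rightarrow> 'c"
    and X :: "'x set" and actX :: "'x \<Rightarrow> 's \<Rightarrow> 'x" and g :: "'c \<Rightarrow> 'x"
    and J :: "'j set" and B :: "'j \<Rightarrow> 'b set" and actB :: "'j \<Rightarrow> 'b \<Rightarrow> 's \<Rightarrow> 'b"
    and f :: "'j \<Rightarrow> 'c \<Rightarrow> 'b"
  assumes actC: "is_act C actC" and actX: "is_act X actX" and g: "is_morph C actC X actX g"
    and actB: "\<And>j. j \<in> J \<Longrightarrow> is_act (B j) (actB j)"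
    and f: "\<And>j. j \<in> J \<Longrightarrow> is_morph C actC (B j) (actB j) (f j)"
    and f_inj: "\<And>j. j \<in> J \<Longrightarrow> inj_on (f j) C"
begin

abbreviation "M \<equiv> amalgam_carrier C f X J B"
abbreviation "actM \<equiv> amalgam_act C g f actX actB"
abbreviation "emb \<equiv> amalgam_emb C g f"

lemma emb_f: "j \<in> J \<Longrightarrow> c \<in> C \<Longrightarrow> emb j (f j c) = Inl (g c)"
  using f_inj by (simp add: amalgam_emb_def)

lemma emb_in: "j \<in> J \<Longrightarrow> b \<in> B j \<Longrightarrow> emb j b \<in> M"
  using g f_inj by (auto simp: amalgam_emb_def amalgam_carrier_def is_morph_def)

lemma emb_act:
  assumes j: "j \<in> J" and b: "b \<in> B j"
  shows "actM (emb j b) t = emb j (actB j b t)"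
proof (cases "b \<in> f j ` C")
  case True
  then obtain c where c: "c \<in> C" "b = f j c" by auto
  have "actM (emb j b) t = Inl (actX (g c) t)"
    using emb_f[OF j c(1)] c by (simp add: amalgam_act_def)
  also have "\<dots> = Inl (g (actC c t))" using g c by (simp add: is_morphD)
  also have "\<dots> = emb j (f j (actC c t))" using emb_f[OF j] actC c by (simp add: is_actD)
  also have "\<dots> = emb j (actB j b t)" using f[OF j] c by (simp add: is_morphD)
  finally show ?thesis .
next
  case False
  then show ?thesis by (simp add: amalgam_emb_def amalgam_act_def)
qed

lemma M_cases:
  assumes "m \<in> M"
  obtains x where "x \<in> X" "m = Inl x"
    | j b where "j \<in> J" "b \<in> B j" "b \<notin> f j ` C" "m = Inr (j, b)"
  using assms by (auto simp: amalgam_carrier_def)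

lemma is_act_M: "is_act M actM"
  unfolding is_act_def
proof (intro conjI ballI allI)
  fix m s assume "m \<in> M"
  then show "actM m s \<in> M"
  proof (cases rule: M_cases)
    case 1
    then show ?thesis using is_actD(1)[OF actX] by (simp add: amalgam_carrier_def amalgam_act_def)
  next
    case (2 j b)
    then have "actB j b s \<in> B j" using actB[OF \<open>j \<in> J\<close>] by (simp add: is_actD)
    then show ?thesis using 2 emb_in by (simp add: amalgam_act_def)
  qed
next
  fix m assume "m \<in> M"
  then show "actM m 1 = m"
  proof (cases rule: M_cases)
    case 1
    then show ?thesis using is_actD(2)[OF actX] by (simp add: amalgam_act_def)
  next
    case (2 j b)
    then have "actB j b 1 = b" using actB[OF \<open>j \<in> J\<close>] by (simp add: is_actD)
    with 2 show ?thesis by (simp add: amalgam_act_def amalgam_emb_def)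
  qed
next
  fix m s t assume "m \<in> M"
  then show "actM m (s * t) = actM (actM m s) t"
  proof (cases rule: M_cases)
    case 1
    then show ?thesis using is_actD(3)[OF actX] by (simp add: amalgam_act_def)
  next
    case (2 j b)
    note act_j = actB[OF \<open>j \<in> J\<close>]
    have "actM m (s * t) = emb j (actB j (actB j b s) t)"
      using 2 is_actD(3)[OF act_j] by (simp add: amalgam_act_def)
    also have "\<dots> = actM (emb j (actB j b s)) t"
      using emb_act[OF \<open>j \<in> J\<close>] 2 is_actD(1)[OF act_j] by simp
    finally show ?thesis using 2 by (simp add: amalgam_act_def)
  qed
qed

lemma Inl_morph: "is_morph X actX M actM Inl"
  by (auto simp: is_morph_def amalgam_carrier_def amalgam_act_def)

lemma emb_morph: "j \<in> J \<Longrightarrow> is_morph (B j) (actB j) M actM (emb j)"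
  using emb_in emb_act by (auto simp: is_morph_def)

end

lemma simultaneous_solution:
  fixes C :: "'c set" and actC :: "'c \<Rightarrow> 's::monoid_mult \<Rightarrow> 'c"
  assumes act: "is_act C actC" and J: "\<And>\<Sigma>. \<Sigma> \<in> J \<Longrightarrow> over C \<Sigma> \<and> consistent C actC \<Sigma>"
  obtains M :: "('c + ('c, 's) eqn fset \<times> ('c + nat \<times> 's)) set" and actM \<iota> \<sigma>
  where "is_act M actM" "is_morph C actC M actM \<iota>" "inj_on \<iota> C"
    "\<And>\<Sigma>. \<Sigma> \<in> J \<Longrightarrow> \<forall>k\<in>vars_of \<Sigma>. \<sigma> \<Sigma> k \<in> M"
    "\<And>\<Sigma>. \<Sigma> \<in> J \<Longrightarrow> solves actM \<iota> (\<sigma> \<Sigma>) \<Sigma>"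
proof -
  have "\<forall>\<Sigma>\<in>J. \<exists>(B :: ('c + nat \<times> 's) set) actB f \<sigma>. is_act B actB \<and> is_morph C actC B actB f
      \<and> inj_on f C \<and> (\<forall>k\<in>vars_of \<Sigma>. \<sigma> k \<in> B) \<and> solves actB f \<sigma> \<Sigma>"
    using J by (simp add: consistent_def)
  then obtain B :: "_ \<Rightarrow> ('c + nat \<times> 's) set" and actB f \<sigma> where W: "\<forall>\<Sigma>\<in>J. is_act (B \<Sigma>) (actB \<Sigma>)
      \<and> is_morph C actC (B \<Sigma>) (actB \<Sigma>) (f \<Sigma>) \<and> inj_on (f \<Sigma>) C
      \<and> (\<forall>k\<in>vars_of \<Sigma>. \<sigma> \<Sigma> k \<in> B \<Sigma>) \<and> solves (actB \<Sigma>) (f \<Sigma>) (\<sigma> \<Sigma>) \<Sigma>"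
    by metis
  have "is_morph C actC C actC id"
    using is_actD(1)[OF act] by (simp add: is_morph_def)
  then interpret amalgam C actC C actC id J B actB f
    using act W by unfold_locales simp_all
  show thesis
  proof (rule that[OF is_act_M Inl_morph, of "\<lambda>\<Sigma>. emb \<Sigma> \<circ> \<sigma> \<Sigma>"])
    show "inj_on Inl C" by simp
    fix \<Sigma> assume "\<Sigma> \<in> J"
    with W have \<Sigma>: "\<forall>k\<in>vars_of \<Sigma>. \<sigma> \<Sigma> k \<in> B \<Sigma>" "solves (actB \<Sigma>) (f \<Sigma>) (\<sigma> \<Sigma>) \<Sigma>"
      by simp_all
    then show "\<forall>k\<in>vars_of \<Sigma>. (emb \<Sigma> \<circ> \<sigma> \<Sigma>) k \<in> M"
      using emb_in \<open>\<Sigma> \<in> J\<close> by simp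
    have "(emb \<Sigma> \<circ> f \<Sigma>) c = Inl c" if "e \<in> fset \<Sigma>" "c \<in> eqn_consts e" for e c
      using J[OF \<open>\<Sigma> \<in> J\<close>] that emb_f \<open>\<Sigma> \<in> J\<close> by (auto simp: over_def)
    moreover have "solves actM (emb \<Sigma> \<circ> f \<Sigma>) (emb \<Sigma> \<circ> \<sigma> \<Sigma>) \<Sigma>"
      using solves_morph[OF emb_morph[OF \<open>\<Sigma> \<in> J\<close>] \<Sigma>] .
    ultimately show "solves actM Inl (emb \<Sigma> \<circ> \<sigma> \<Sigma>) \<Sigma>"
      by (rule solves_cong[THEN iffD1])
  qed
qed

lemma consistent_map_morph:
  fixes C :: "'c set" and actC :: "'c \<Rightarrow> 's::monoid_mult \<Rightarrow> 'c"
  assumes "is_act C actC" "is_act X actX" "is_morph C actC X actX g"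
    and "over C \<Sigma>" "consistent C actC \<Sigma>"
  shows "consistent X actX (fimage (eqn_map g) \<Sigma>)"
proof -
  obtain B :: "('c + nat \<times> 's) set" and actB f \<sigma>
    where B: "is_act B actB" "is_morph C actC B actB f" "inj_on f C"
      "\<forall>k\<in>vars_of \<Sigma>. \<sigma> k \<in> B" "solves actB f \<sigma> \<Sigma>"
    using assms(5) by (rule consistentE)
  interpret amalgam C actC X actX g "{()}" "\<lambda>_. B" "\<lambda>_. actB" "\<lambda>_. f"
    using assms B by unfold_locales simp_all
  have "(emb () \<circ> f) a = (Inl \<circ> g) a" if "e \<in> fset \<Sigma>" "a \<in> eqn_consts e" for e a
    using assms(4) that emb_f by (auto simp: over_def)
  moreover have "solves actM (emb () \<circ> f) (emb () \<circ> \<sigma>) \<Sigma>"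
    using solves_morph[OF emb_morph B(4,5)] by simp
  ultimately have sol: "solves actM Inl (emb () \<circ> \<sigma>) (fimage (eqn_map g) \<Sigma>)"
    unfolding solves_map by (rule solves_cong[THEN iffD1])
  have "\<forall>k\<in>vars_of (fimage (eqn_map g) \<Sigma>). (emb () \<circ> \<sigma>) k \<in> M"
    using B(4) emb_in by simp
  then show ?thesis
    using consistentI[OF assms(2) is_act_M Inl_morph _ _ sol] by simp
qed

lemma consistent_restrict:
  fixes X :: "'x set" and actX :: "'x \<Rightarrow> 's::monoid_mult \<Rightarrow> 'x"
  assumes "is_act C actC" "is_morph C actC X actX j" "inj_on j C"
    and "consistent X actX (fimage (eqn_map j) \<Sigma>)"
  shows "consistent C actC \<Sigma>"
proof -
  obtain B :: "('x + nat \<times> 's) set" and actB f \<sigma>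
    where B: "is_act B actB" "is_morph X actX B actB f" "inj_on f X"
      "\<forall>k\<in>vars_of \<Sigma>. \<sigma> k \<in> B" "solves actB f \<sigma> (fimage (eqn_map j) \<Sigma>)"
    using assms(4) by (rule consistentE) simp
  have "inj_on (f \<circ> j) C"
    using assms(2,3) B(3) by (auto simp: inj_on_def is_morph_def)
  then show ?thesis
    using consistentI[OF assms(1) B(1) is_morph_comp[OF assms(2) B(2)] _ B(4)] B(5)
    by (simp add: solves_map)
qed

section \<open>Purity and retracts\<close>

definition pure_wrt :: "(nat \<Rightarrow> bool) \<Rightarrow> 'c set \<Rightarrow> ('c \<Rightarrow> 's::monoid_mult \<Rightarrow> 'c) \<Rightarrow> bool" where
  "pure_wrt P X act \<longleftrightarrow> (\<forall>\<Sigma>. over X \<Sigma> \<and> P (nvars \<Sigma>) \<and> consistent X act \<Sigma>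
       \<longrightarrow> (\<exists>\<sigma>. (\<forall>k\<in>vars_of \<Sigma>. \<sigma> k \<in> X) \<and> solves act id \<sigma> \<Sigma>))"

lemma n_abs_pure_iff_pure_wrt: "n_abs_pure n X act \<longleftrightarrow> pure_wrt (\<lambda>m. m \<le> n) X act"
  by (simp add: n_abs_pure_def pure_wrt_def)

lemma abs_pure_iff_pure_wrt: "abs_pure X act \<longleftrightarrow> pure_wrt (\<lambda>m. True) X act"
  unfolding abs_pure_def n_abs_pure_def pure_wrt_def by blast

lemma pure_wrt_retract:
  assumes "is_act A act" "is_act Y actY" "is_morph A act Y actY e"
    and "is_retract A act Y actY e" "pure_wrt P Y actY"
  shows "pure_wrt P A act"
  unfolding pure_wrt_def
proof (intro allI impI, elim conjE)
  fix \<Sigma> assume ov: "over A \<Sigma>" and P: "P (nvars \<Sigma>)" and co: "consistent A act \<Sigma>"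
  obtain g where g: "is_morph Y actY A act g" "\<forall>a\<in>A. g (e a) = a"
    using assms(4) by (auto simp: is_retract_def)
  have "over Y (fimage (eqn_map e) \<Sigma>)"
    using ov assms(3) by (auto simp: over_map over_def is_morph_def)
  moreover have "consistent Y actY (fimage (eqn_map e) \<Sigma>)"
    using consistent_map_morph[OF assms(1-3) ov co] .
  ultimately obtain \<tau> where \<tau>: "\<forall>k\<in>vars_of \<Sigma>. \<tau> k \<in> Y" "solves actY e \<tau> \<Sigma>"
    using assms(5) P unfolding pure_wrt_def by (fastforce simp: solves_map)
  have "(g \<circ> e) a = id a" if "e' \<in> fset \<Sigma>" "a \<in> eqn_consts e'" for e' a
    using ov g(2) that by (auto simp: over_def)
  moreover have "solves act (g \<circ> e) (g \<circ> \<tau>) \<Sigma>"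
    using solves_morph[OF g(1) \<tau>] by simp
  ultimately have "solves act id (g \<circ> \<tau>) \<Sigma>"
    by (rule solves_cong[THEN iffD1])
  moreover have "\<forall>k\<in>vars_of \<Sigma>. (g \<circ> \<tau>) k \<in> A"
    using \<tau>(1) g(1) by (simp add: is_morph_def)
  ultimately show "\<exists>\<sigma>. (\<forall>k\<in>vars_of \<Sigma>. \<sigma> k \<in> A) \<and> solves act id \<sigma> \<Sigma>"
    by blast
qed

section \<open>Congruences and quotients of raw elements\<close>

lemma congr_subset:
  assumes "R \<subseteq> D \<times> D" "\<forall>x\<in>D. \<forall>s. f x s \<in> D"
  shows "congr D f R \<subseteq> D \<times> D"
proof -
  have "x \<in> D \<and> y \<in> D" if "(x, y) \<in> congr D f R" for x y
    using that by induction (use assms in auto)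
  then show ?thesis by auto
qed

lemma equiv_congr:
  assumes "R \<subseteq> D \<times> D" "\<forall>x\<in>D. \<forall>s. f x s \<in> D"
  shows "equiv D (congr D f R)"
  using congr_subset[OF assms]
  by (auto simp: equiv_def refl_on_def sym_def trans_def intro: congr.refl congr.sym congr.trans)

lemma congr_kernel:
  assumes "R \<subseteq> D \<times> D" "\<forall>x\<in>D. \<forall>s. f x s \<in> D"
    and hom: "\<forall>x\<in>D. \<forall>s. h (f x s) = F (h x) s" and "\<forall>(x, y)\<in>R. h x = h y"
    and "(x, y) \<in> congr D f R"
  shows "h x = h y"
  using assms(5)
proof induction
  case (compat x y s)
  then have "x \<in> D" "y \<in> D" using congr_subset[OF assms(1,2)] by blast+
  with compat hom show ?case by simp
qed (use assms(4) in auto)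

definition wf_elt :: "'a set \<Rightarrow> ('a, 's) elt \<Rightarrow> bool" where
  "wf_elt A d \<longleftrightarrow> (case d of Base a \<Rightarrow> a \<in> A | Gen _ _ _ _ \<Rightarrow> True)"

lemma ract_one: "is_act A act \<Longrightarrow> wf_elt A d \<Longrightarrow> ract act d 1 = d"
  by (cases d) (auto simp: wf_elt_def is_act_def)

lemma ract_mult: "is_act A act \<Longrightarrow> wf_elt A d \<Longrightarrow> ract act d (s * t) = ract act (ract act d s) t"
  by (cases d) (auto simp: wf_elt_def is_act_def mult.assoc)

text \<open>The conditions under which D // E with the induced action qact E (ract act) is an act.\<close>
definition raw_quotient :: "'a set \<Rightarrow> ('a \<Rightarrow> 's::monoid_mult \<Rightarrow> 'a) \<Rightarrow> ('a, 's) elt set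
    \<Rightarrow> ('a, 's) elt rel \<Rightarrow> bool" where
  "raw_quotient A act D E \<longleftrightarrow> equiv D E \<and> (\<forall>d\<in>D. wf_elt A d \<and> (\<forall>s. ract act d s \<in> D))
     \<and> (\<forall>x y s. (x, y) \<in> E \<longrightarrow> (ract act x s, ract act y s) \<in> E)"

context
  fixes A act D E
  assumes quot: "raw_quotient A act D E"
begin

lemma raw_quotient_equiv: "equiv D E"
  using quot by (simp add: raw_quotient_def)

lemma raw_quotient_closed: "d \<in> D \<Longrightarrow> ract act d s \<in> D"
  using quot by (simp add: raw_quotient_def)

lemma raw_quotient_wf: "d \<in> D \<Longrightarrow> wf_elt A d"
  using quot by (simp add: raw_quotient_def)

lemma raw_quotient_compat: "(x, y) \<in> E \<Longrightarrow> (ract act x s, ract act y s) \<in> E"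
  using quot by (simp add: raw_quotient_def)

lemma raw_quotient_in: "(x, y) \<in> E \<Longrightarrow> x \<in> D \<and> y \<in> D"
  using raw_quotient_equiv by (auto simp: equiv_def refl_on_def)

lemma raw_quotient_refl: "d \<in> D \<Longrightarrow> (d, d) \<in> E"
  using raw_quotient_equiv by (auto simp: equiv_def refl_on_def)

lemma class_eq: "(x, y) \<in> E \<Longrightarrow> E `` {x} = E `` {y}"
  using raw_quotient_equiv by (rule equiv_class_eq)

lemma class_eq_iff: "x \<in> D \<Longrightarrow> y \<in> D \<Longrightarrow> E `` {x} = E `` {y} \<longleftrightarrow> (x, y) \<in> E"
  using raw_quotient_equiv by (rule eq_equiv_class_iff)

lemma qact_class:
  assumes "d \<in> D"
  shows "qact E (ract act) (E `` {d}) s = E `` {ract act d s}"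
proof
  show "qact E (ract act) (E `` {d}) s \<subseteq> E `` {ract act d s}"
  proof
    fix z assume "z \<in> qact E (ract act) (E `` {d}) s"
    then obtain y where y: "(d, y) \<in> E" "(ract act y s, z) \<in> E" by (auto simp: qact_def)
    then show "z \<in> E `` {ract act d s}"
      using class_eq[OF raw_quotient_compat[OF y(1)]] by simp
  qed
  show "E `` {ract act d s} \<subseteq> qact E (ract act) (E `` {d}) s"
    using raw_quotient_refl[OF assms] by (auto simp: qact_def)
qed

lemma rep_class:
  assumes "c \<in> D // E"
  shows "rep c \<in> c" "rep c \<in> D" "E `` {rep c} = c"
proof -
  obtain d where d: "d \<in> D" "c = E `` {d}" using assms by (auto elim: quotientE)
  then have "d \<in> c" using raw_quotient_refl by simp
  then show "rep c \<in> c" unfolding rep_def by (rule someI)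
  then have dc: "(d, rep c) \<in> E" using d by simp
  then show "rep c \<in> D" using raw_quotient_in by blast
  show "E `` {rep c} = c" using class_eq[OF dc, symmetric] d by simp
qed

lemma quotient_member:
  assumes "c \<in> D // E" "d \<in> c"
  shows "d \<in> D" "c = E `` {d}"
proof -
  have "(rep c, d) \<in> E" using rep_class(3)[OF assms(1)] assms(2) by blast
  then show "d \<in> D" "c = E `` {d}"
    using raw_quotient_in class_eq rep_class(3)[OF assms(1)] by auto
qed

lemma is_act_quotient:
  assumes "is_act A act"
  shows "is_act (D // E) (qact E (ract act))"
  unfolding is_act_def
proof (intro conjI ballI allI)
  fix c s assume "c \<in> D // E"
  then obtain d where d: "d \<in> D" "c = E `` {d}" by (auto elim: quotientE)
  then show "qact E (ract act) c s \<in> D // E"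
    by (simp add: qact_class raw_quotient_closed quotientI)
  show "qact E (ract act) c 1 = c"
    using d by (simp add: qact_class ract_one[OF assms raw_quotient_wf])
  show "qact E (ract act) c (s * t) = qact E (ract act) (qact E (ract act) c s) t" for t
    using d by (simp add: qact_class raw_quotient_closed ract_mult[OF assms raw_quotient_wf])
qed

end

lemma raw_quotient_UN:
  fixes D :: "'i::linorder \<Rightarrow> ('a, 's::monoid_mult) elt set"
  assumes quot: "\<And>i. raw_quotient A act (D i) (E i)" and "mono D" "mono E"
  shows "raw_quotient A act (\<Union>i. D i) (\<Union>i. E i)"
proof -
  have E_max: "(x, y) \<in> E (max i j)" if "(x, y) \<in> E i \<or> (x, y) \<in> E j" for x y i j
    using that monoD[OF assms(3) max.cobounded1] monoD[OF assms(3) max.cobounded2] by blast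
  have "trans (\<Union>i. E i)"
  proof (rule transI)
    fix x y z assume "(x, y) \<in> (\<Union>i. E i)" "(y, z) \<in> (\<Union>i. E i)"
    then obtain i j where "(x, y) \<in> E i" "(y, z) \<in> E j" by blast
    then have "(x, y) \<in> E (max i j)" "(y, z) \<in> E (max i j)" using E_max by blast+
    moreover have "trans (E (max i j))" using raw_quotient_equiv[OF quot] by (simp add: equiv_def)
    ultimately show "(x, z) \<in> (\<Union>i. E i)" by (blast dest: transD)
  qed
  moreover have "(\<Union>i. E i) \<subseteq> (\<Union>i. D i) \<times> (\<Union>i. D i)"
    using raw_quotient_in[OF quot] by fast
  moreover have "(d, d) \<in> (\<Union>i. E i)" if "d \<in> (\<Union>i. D i)" for d
    using that raw_quotient_refl[OF quot] by blast
  moreover have "sym (\<Union>i. E i)"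
    using raw_quotient_equiv[OF quot] by (auto simp: sym_def equiv_def)
  ultimately have "equiv (\<Union>i. D i) (\<Union>i. E i)"
    by (auto simp: equiv_def refl_on_def)
  moreover have "wf_elt A d \<and> (\<forall>s. ract act d s \<in> (\<Union>i. D i))" if "d \<in> (\<Union>i. D i)" for d
  proof -
    from that obtain i where "d \<in> D i" by blast
    then show ?thesis using raw_quotient_wf[OF quot] raw_quotient_closed[OF quot, of d i] by auto
  qed
  moreover have "(ract act x s, ract act y s) \<in> (\<Union>i. E i)" if "(x, y) \<in> (\<Union>i. E i)" for x y s
  proof -
    from that obtain i where "(x, y) \<in> E i" by blast
    then show ?thesis using raw_quotient_compat[OF quot, of x y i s] by auto
  qed
  ultimately show ?thesis
    unfolding raw_quotient_def by auto
qed

section \<open>The construction A(P)\<close>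

locale extension =
  fixes P :: "nat \<Rightarrow> bool" and A :: "'a set" and act :: "'a \<Rightarrow> 's::monoid_mult \<Rightarrow> 'a"
  assumes is_act_A: "is_act A act"
begin

definition D :: "nat \<Rightarrow> ('a, 's) elt set" where
  "D i = fst (stage P A act i)"

definition E :: "nat \<Rightarrow> ('a, 's) elt rel" where
  "E i = snd (stage P A act i)"

abbreviation "D_union \<equiv> \<Union>i. D i"
abbreviation "E_union \<equiv> \<Union>i. E i"
abbreviation "AP \<equiv> ext_carrier P A act"
abbreviation "actAP \<equiv> ext_act P A act"
abbreviation "embAP \<equiv> ext_emb P A act"

abbreviation C :: "nat \<Rightarrow> ('a, 's) elt set set" where
  "C i \<equiv> D i // E i"

abbreviation actC :: "nat \<Rightarrow> ('a, 's) elt set \<Rightarrow> 's \<Rightarrow> ('a, 's) elt set" where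
  "actC i \<equiv> qact (E i) (ract act)"

definition Th :: "nat \<Rightarrow> (('a, 's) elt set, 's) eqn fset set" where
  "Th i = {\<Sigma>. over (C i) \<Sigma> \<and> consistent (C i) (actC i) \<Sigma> \<and> P (nvars \<Sigma>)}"

definition N :: "nat \<Rightarrow> ('a, 's) elt set" where
  "N i = {Gen (Suc i) (tag \<Sigma>) k s | \<Sigma> k s. \<Sigma> \<in> Th i \<and> k \<in> vars_of \<Sigma>}"

definition H :: "nat \<Rightarrow> ('a, 's) elt rel" where
  "H i = {(Gen (Suc i) (tag \<Sigma>) x u, Gen (Suc i) (tag \<Sigma>) y v) | \<Sigma> x u y v.
            \<Sigma> \<in> Th i \<and> EqVV x u y v \<in> fset \<Sigma>}"

definition K :: "nat \<Rightarrow> ('a, 's) elt rel" where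
  "K i = {(Gen (Suc i) (tag \<Sigma>) x s, rep a) | \<Sigma> x s a. \<Sigma> \<in> Th i \<and> EqVC x s a \<in> fset \<Sigma>}"

lemma D_0: "D 0 = Base ` A" and E_0: "E 0 = Id_on (Base ` A)"
  by (simp_all add: D_def E_def)

lemma D_Suc: "D (Suc i) = D i \<union> N i"
  and E_Suc: "E (Suc i) = congr (D i \<union> N i) (ract act) (E i \<union> H i \<union> K i)"
  by (simp_all add: D_def E_def Th_def N_def H_def K_def Let_def)

lemma N_closed: "x \<in> N i \<Longrightarrow> ract act x s \<in> N i"
  unfolding N_def by fastforce

lemma N_cases:
  assumes "x \<in> N i"
  obtains \<Sigma> k s where "x = Gen (Suc i) (tag \<Sigma>) k s" "\<Sigma> \<in> Th i" "k \<in> vars_of \<Sigma>"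
  using assms unfolding N_def by blast

lemma Gen_in_N: "\<Sigma> \<in> Th i \<Longrightarrow> k \<in> vars_of \<Sigma> \<Longrightarrow> Gen (Suc i) (tag \<Sigma>) k s \<in> N i"
  unfolding N_def by blast

lemma D_Suc_closed:
  "raw_quotient A act (D i) (E i) \<Longrightarrow> \<forall>x\<in>D i \<union> N i. \<forall>s. ract act x s \<in> D i \<union> N i"
  using raw_quotient_closed N_closed by blast

lemma generators_subset:
  assumes quot_i: "raw_quotient A act (D i) (E i)"
  shows "E i \<union> H i \<union> K i \<subseteq> (D i \<union> N i) \<times> (D i \<union> N i)"
proof -
  have "E i \<subseteq> D i \<times> D i" using raw_quotient_in[OF quot_i] by auto
  moreover have "H i \<subseteq> N i \<times> N i"
    by (auto simp: H_def intro!: Gen_in_N dest: EqVV_vars)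
  moreover have "K i \<subseteq> N i \<times> D i"
  proof
    fix p assume "p \<in> K i"
    then obtain \<Sigma> x s a where p: "p = (Gen (Suc i) (tag \<Sigma>) x s, rep a)" "\<Sigma> \<in> Th i"
        "EqVC x s a \<in> fset \<Sigma>"
      by (auto simp: K_def)
    then have "a \<in> C i" by (auto simp: Th_def dest: over_EqVC)
    moreover have "Gen (Suc i) (tag \<Sigma>) x s \<in> N i"
      using Gen_in_N[OF p(2) EqVC_vars[OF p(3)]] .
    ultimately show "p \<in> N i \<times> D i"
      using p(1) rep_class(2)[OF quot_i] by simp
  qed
  ultimately show ?thesis by blast
qed

text \<open>The bound on the stage indices of generators makes the generators adjoined at stage i + 1
  fresh.\<close>
definition stage_inv :: "nat \<Rightarrow> bool" where
  "stage_inv i \<longleftrightarrow> raw_quotient A act (D i) (E i)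
     \<and> (\<forall>d\<in>D i. case d of Base _ \<Rightarrow> True | Gen j _ _ _ \<Rightarrow> j \<le> i)"

lemma stage_inv_0: "stage_inv 0"
  using is_act_A unfolding stage_inv_def raw_quotient_def D_0 E_0
  by (auto simp: wf_elt_def is_act_def equiv_def refl_on_def sym_def trans_def)

lemma stage_inv_Suc:
  assumes "stage_inv i"
  shows "stage_inv (Suc i)"
proof -
  have quot_i: "raw_quotient A act (D i) (E i)" using assms by (simp add: stage_inv_def)
  have "equiv (D i \<union> N i) (E (Suc i))"
    unfolding E_Suc by (rule equiv_congr[OF generators_subset[OF quot_i] D_Suc_closed[OF quot_i]])
  moreover have "wf_elt A d" if "d \<in> D i \<union> N i" for d
    using that raw_quotient_wf[OF quot_i] by (auto simp: N_def wf_elt_def)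
  moreover have "(ract act x s, ract act y s) \<in> E (Suc i)" if "(x, y) \<in> E (Suc i)" for x y s
    using that unfolding E_Suc by (rule congr.compat)
  moreover have "case d of Base _ \<Rightarrow> True | Gen j _ _ _ \<Rightarrow> j \<le> Suc i" if "d \<in> D i \<union> N i" for d
    using that assms by (fastforce simp: stage_inv_def N_def split: elt.splits)
  ultimately show ?thesis
    using D_Suc_closed[OF quot_i] by (simp add: stage_inv_def raw_quotient_def D_Suc)
qed

lemma stage_inv: "stage_inv i"
  by (induction i) (use stage_inv_0 stage_inv_Suc in auto)

lemma quot_stage: "raw_quotient A act (D i) (E i)"
  using stage_inv by (simp add: stage_inv_def)

lemma N_disjoint_D: "x \<in> N i \<Longrightarrow> x \<notin> D i"
  using stage_inv[of i] by (force simp: N_def stage_inv_def)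

lemma E_Suc_kernel:
  assumes hom: "\<forall>x\<in>D (Suc i). \<forall>s. h (ract act x s) = F (h x) s"
    and E: "\<And>x y. (x, y) \<in> E i \<Longrightarrow> h x = h y"
    and H: "\<And>\<Sigma> a u b v. \<Sigma> \<in> Th i \<Longrightarrow> EqVV a u b v \<in> fset \<Sigma>
              \<Longrightarrow> h (Gen (Suc i) (tag \<Sigma>) a u) = h (Gen (Suc i) (tag \<Sigma>) b v)"
    and K: "\<And>\<Sigma> a u c. \<Sigma> \<in> Th i \<Longrightarrow> EqVC a u c \<in> fset \<Sigma>
              \<Longrightarrow> h (Gen (Suc i) (tag \<Sigma>) a u) = h (rep c)"
    and xy: "(x, y) \<in> E (Suc i)"
  shows "h x = h y"
proof (rule congr_kernel[OF generators_subset[OF quot_stage] D_Suc_closed[OF quot_stage]])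
  show "\<forall>x\<in>D i \<union> N i. \<forall>s. h (ract act x s) = F (h x) s" using hom by (simp add: D_Suc)
  show "\<forall>(x, y)\<in>E i \<union> H i \<union> K i. h x = h y"
    using E H K by (auto simp: H_def K_def)
  show "(x, y) \<in> congr (D i \<union> N i) (ract act) (E i \<union> H i \<union> K i)" using xy by (simp add: E_Suc)
qed

definition untag :: "nat \<Rightarrow> (('a, 's) elt, 's) eqn fset \<Rightarrow> (('a, 's) elt set, 's) eqn fset" where
  "untag i T = fimage (eqn_map (\<lambda>d. E i `` {d})) T"

lemma untag_tag: "over (C i) \<Sigma> \<Longrightarrow> untag i (tag \<Sigma>) = \<Sigma>"
  unfolding untag_def tag_def fimage_eqn_map_comp
proof (rule fimage_eqn_map_id)
  fix e a assume "over (C i) \<Sigma>" "e \<in> fset \<Sigma>" "a \<in> eqn_consts e"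
  then have "a \<in> C i" by (auto simp: over_def)
  then show "((\<lambda>d. E i `` {d}) \<circ> rep) a = a" using rep_class(3)[OF quot_stage] by simp
qed

lemma is_act_C: "is_act (C i) (actC i)"
  using is_act_quotient[OF quot_stage is_act_A] .

lemma E_Suc_restrict_common_solution:
  assumes M: "is_act M actM" "is_morph (C i) (actC i) M actM \<iota>" "inj_on \<iota> (C i)"
    and \<sigma>: "\<And>\<Sigma>. \<Sigma> \<in> Th i \<Longrightarrow> \<forall>k\<in>vars_of \<Sigma>. \<sigma> \<Sigma> k \<in> M"
      "\<And>\<Sigma>. \<Sigma> \<in> Th i \<Longrightarrow> solves actM \<iota> (\<sigma> \<Sigma>) \<Sigma>"
    and x: "x \<in> D i" and y: "y \<in> D i" and xy: "(x, y) \<in> E (Suc i)"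
  shows "(x, y) \<in> E i"
proof -
  define h where "h d = (if d \<in> D i then \<iota> (E i `` {d}) else case d of
      Gen j T k s \<Rightarrow> actM (\<sigma> (untag i T) k) s | Base a \<Rightarrow> undefined)" for d
  have h_old: "h d = \<iota> (E i `` {d})" if "d \<in> D i" for d
    using that by (simp add: h_def)
  have h_new: "h (Gen (Suc i) (tag \<Sigma>) k s) = actM (\<sigma> \<Sigma> k) s" if "\<Sigma> \<in> Th i" "k \<in> vars_of \<Sigma>" for \<Sigma> k s
    using that N_disjoint_D[OF Gen_in_N[OF that]] by (simp add: h_def untag_tag Th_def)
  have "h x = h y"
  proof (rule E_Suc_kernel[OF _ _ _ _ xy])
    show "\<forall>x\<in>D (Suc i). \<forall>s. h (ract act x s) = actM (h x) s"
    proof (intro ballI allI)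
      fix x s assume "x \<in> D (Suc i)"
      then consider "x \<in> D i" | "x \<in> N i" by (auto simp: D_Suc)
      then show "h (ract act x s) = actM (h x) s"
      proof cases
        case 1
        then have "E i `` {ract act x s} = actC i (E i `` {x}) s"
          by (simp add: qact_class[OF quot_stage])
        then show ?thesis using is_morphD(2)[OF M(2), of "E i `` {x}" s] 1
          by (simp add: h_old raw_quotient_closed[OF quot_stage] quotientI)
      next
        case 2
        then obtain \<Sigma> k u where x: "x = Gen (Suc i) (tag \<Sigma>) k u" "\<Sigma> \<in> Th i" "k \<in> vars_of \<Sigma>"
          by (rule N_cases)
        then show ?thesis
          using is_actD(3)[OF M(1) bspec[OF \<sigma>(1) x(3)]] by (simp add: h_new)
      qed
    qed
    show "h x = h y" if "(x, y) \<in> E i" for x y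
      using that raw_quotient_in[OF quot_stage] class_eq[OF quot_stage] by (simp add: h_old)
    show "h (Gen (Suc i) (tag \<Sigma>) a u) = h (Gen (Suc i) (tag \<Sigma>) b v)"
      if "\<Sigma> \<in> Th i" "EqVV a u b v \<in> fset \<Sigma>" for \<Sigma> a u b v
      using that \<sigma>(2)[OF that(1)] EqVV_vars[OF that(2)] by (simp add: h_new solves_iff)
    show "h (Gen (Suc i) (tag \<Sigma>) a u) = h (rep c)"
      if "\<Sigma> \<in> Th i" "EqVC a u c \<in> fset \<Sigma>" for \<Sigma> a u c
    proof -
      have "c \<in> C i" using that by (auto simp: Th_def dest: over_EqVC)
      then show ?thesis
        using that \<sigma>(2)[OF that(1)] EqVC_vars[OF that(2)] rep_class[OF quot_stage]
        by (simp add: h_new h_old solves_iff)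
    qed
  qed
  then have "E i `` {x} = E i `` {y}"
    using M(3) x y by (simp add: h_old inj_on_def quotientI)
  then show ?thesis using class_eq_iff[OF quot_stage x y] by simp
qed

text \<open>Stage i embeds into stage i + 1, because all systems of Th i can be solved simultaneously in
  a single extension of C i.\<close>
lemma E_Suc_restrict:
  assumes "x \<in> D i" "y \<in> D i" "(x, y) \<in> E (Suc i)"
  shows "(x, y) \<in> E i"
proof -
  have "\<And>\<Sigma>. \<Sigma> \<in> Th i \<Longrightarrow> over (C i) \<Sigma> \<and> consistent (C i) (actC i) \<Sigma>"
    by (simp add: Th_def)
  then show ?thesis
  proof (rule simultaneous_solution[OF is_act_C])
    show "(x, y) \<in> E i" if "is_act M actM" "is_morph (C i) (actC i) M actM \<iota>" "inj_on \<iota> (C i)"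
      "\<And>\<Sigma>. \<Sigma> \<in> Th i \<Longrightarrow> \<forall>k\<in>vars_of \<Sigma>. \<sigma> \<Sigma> k \<in> M"
      "\<And>\<Sigma>. \<Sigma> \<in> Th i \<Longrightarrow> solves actM \<iota> (\<sigma> \<Sigma>) \<Sigma>" for M actM \<iota> \<sigma>
      using E_Suc_restrict_common_solution[OF that assms] .
  qed
qed

lemma mono_D: "mono D"
  unfolding mono_def
proof (intro allI impI)
  fix i j :: nat assume "i \<le> j"
  then show "D i \<subseteq> D j" by (induction j) (auto simp: D_Suc le_Suc_eq)
qed

lemma mono_E: "mono E"
  unfolding mono_def
proof (intro allI impI)
  fix i j :: nat assume "i \<le> j"
  then show "E i \<subseteq> E j" by (induction j) (auto simp: E_Suc le_Suc_eq intro: congr.gen)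
qed

lemma E_restrict: "i \<le> j \<Longrightarrow> x \<in> D i \<Longrightarrow> y \<in> D i \<Longrightarrow> (x, y) \<in> E j \<Longrightarrow> (x, y) \<in> E i"
proof (induction j)
  case (Suc j)
  show ?case
  proof (cases "i = Suc j")
    case False
    then have "i \<le> j" using Suc by simp
    with Suc show ?thesis using monoD[OF mono_D] E_Suc_restrict by blast
  qed (use Suc in simp)
qed simp

lemma ext_rel_eq: "ext_rel P A act = E_union"
  by (simp add: ext_rel_def E_def)

lemma ext_carrier_eq: "AP = D_union // E_union"
  by (simp add: ext_carrier_def ext_rel_eq D_def)

lemma ext_act_eq: "actAP = qact E_union (ract act)"
  by (simp add: ext_act_def ext_rel_eq)

lemma quot_union: "raw_quotient A act D_union E_union"
  using raw_quotient_UN[OF quot_stage mono_D mono_E] .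

lemma ext_rel_restrict:
  assumes "x \<in> D i" "y \<in> D i" "(x, y) \<in> E_union"
  shows "(x, y) \<in> E i"
proof -
  obtain j where j: "(x, y) \<in> E j" using assms(3) by blast
  show ?thesis
  proof (cases "i \<le> j")
    case True
    then show ?thesis using E_restrict assms(1,2) j by blast
  next
    case False
    then show ?thesis using monoD[OF mono_E, of j i] j by auto
  qed
qed

lemma is_act_ext: "is_act AP actAP"
  using is_act_quotient[OF quot_union is_act_A] by (simp add: ext_carrier_eq ext_act_eq)

lemma is_morph_ext_emb: "is_morph A act AP actAP embAP"
  unfolding is_morph_def
proof (intro conjI ballI allI)
  fix a s assume "a \<in> A"
  then have a: "Base a \<in> D_union" using D_0 by blast
  then show "embAP a \<in> AP"
    by (simp add: ext_emb_def ext_rel_eq ext_carrier_eq quotientI)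
  show "embAP (act a s) = actAP (embAP a) s"
    using qact_class[OF quot_union a] by (simp add: ext_emb_def ext_rel_eq ext_act_eq)
qed

lemma ext_class_stage_class:
  assumes "d \<in> D i"
  shows "E_union `` (E i `` {d}) = E_union `` {d}"
proof
  have "trans E_union" using raw_quotient_equiv[OF quot_union] by (simp add: equiv_def)
  then show "E_union `` (E i `` {d}) \<subseteq> E_union `` {d}"
    by (auto dest: transD)
  show "E_union `` {d} \<subseteq> E_union `` (E i `` {d})"
    using raw_quotient_refl[OF quot_stage assms] by auto
qed

lemma stage_embedding:
  "is_morph (C i) (actC i) AP actAP (\<lambda>c. E_union `` c)"
  "inj_on (\<lambda>c. E_union `` c) (C i)"
proof -
  have D: "d \<in> D_union" if "d \<in> D i" for d using that by blast
  show "is_morph (C i) (actC i) AP actAP (\<lambda>c. E_union `` c)"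
    unfolding is_morph_def
  proof (intro conjI ballI allI)
    fix c s assume "c \<in> C i"
    then obtain d where d: "d \<in> D i" "c = E i `` {d}" by (auto elim: quotientE)
    then show "E_union `` c \<in> AP"
      using quotientI[OF D[OF d(1)]] by (simp add: ext_class_stage_class ext_carrier_eq)
    show "E_union `` actC i c s = actAP (E_union `` c) s"
      using d raw_quotient_closed[OF quot_stage d(1)]
      by (simp add: qact_class[OF quot_stage] qact_class[OF quot_union D] ext_class_stage_class ext_act_eq)
  qed
  show "inj_on (\<lambda>c. E_union `` c) (C i)"
  proof (rule inj_onI)
    fix c c' assume "c \<in> C i" "c' \<in> C i" and eq: "E_union `` c = E_union `` c'"
    then obtain d d' where d: "d \<in> D i" "c = E i `` {d}" and d': "d' \<in> D i" "c' = E i `` {d'}"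
      by (auto elim!: quotientE)
    then have "(d, d') \<in> E_union"
      using eq class_eq_iff[OF quot_union D D] by (simp add: ext_class_stage_class)
    then show "c = c'"
      using d d' ext_rel_restrict class_eq[OF quot_stage] by simp
  qed
qed

section \<open>A(P) is P-pure\<close>

lemma generators_solve:
  assumes \<Sigma>: "\<Sigma> \<in> Th m"
  defines "\<tau> \<equiv> \<lambda>k. E_union `` {Gen (Suc m) (tag \<Sigma>) k 1}"
  shows "\<forall>k\<in>vars_of \<Sigma>. \<tau> k \<in> AP"
    and "solves actAP (\<lambda>c. E_union `` c) \<tau> \<Sigma>"
proof -
  have gen: "Gen (Suc m) (tag \<Sigma>) k s \<in> D_union" if "k \<in> vars_of \<Sigma>" for k s
  proof -
    have "Gen (Suc m) (tag \<Sigma>) k s \<in> D (Suc m)" using Gen_in_N[OF \<Sigma> that] by (simp add: D_Suc)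
    then show ?thesis by blast
  qed
  have act: "actAP (\<tau> k) s = E_union `` {Gen (Suc m) (tag \<Sigma>) k s}"
    if "k \<in> vars_of \<Sigma>" for k s
    using qact_class[OF quot_union gen[OF that]] by (simp add: \<tau>_def ext_act_eq)
  have ext: "(a, b) \<in> E_union" if "(a, b) \<in> H m \<union> K m" for a b
  proof -
    have "(a, b) \<in> E (Suc m)" using that unfolding E_Suc by (blast intro: congr.gen)
    then show ?thesis by blast
  qed
  show "\<forall>k\<in>vars_of \<Sigma>. \<tau> k \<in> AP"
    using gen by (simp add: \<tau>_def ext_carrier_eq quotientI)
  show "solves actAP (\<lambda>c. E_union `` c) \<tau> \<Sigma>"
    unfolding solves_iff
  proof (intro conjI allI impI)
    fix x u y v assume e: "EqVV x u y v \<in> fset \<Sigma>"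
    then have "(Gen (Suc m) (tag \<Sigma>) x u, Gen (Suc m) (tag \<Sigma>) y v) \<in> H m"
      using \<Sigma> unfolding H_def by blast
    then have "(Gen (Suc m) (tag \<Sigma>) x u, Gen (Suc m) (tag \<Sigma>) y v) \<in> E_union"
      using ext by blast
    then show "actAP (\<tau> x) u = actAP (\<tau> y) v"
      using class_eq[OF quot_union] act EqVV_vars[OF e] by simp
  next
    fix x s c assume e: "EqVC x s c \<in> fset \<Sigma>"
    then have c: "c \<in> C m" using \<Sigma> by (auto simp: Th_def dest: over_EqVC)
    have "(Gen (Suc m) (tag \<Sigma>) x s, rep c) \<in> K m"
      using \<Sigma> e unfolding K_def by blast
    then have "(Gen (Suc m) (tag \<Sigma>) x s, rep c) \<in> E_union"
      using ext by blast
    then have "actAP (\<tau> x) s = E_union `` {rep c}"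
      using class_eq[OF quot_union] act EqVC_vars[OF e] by simp
    also have "\<dots> = E_union `` c"
      using ext_class_stage_class[OF rep_class(2)[OF quot_stage c]] rep_class(3)[OF quot_stage c] by simp
    finally show "actAP (\<tau> x) s = E_union `` c" .
  qed
qed

lemma finite_subset_stage: "finite F \<Longrightarrow> F \<subseteq> D_union \<Longrightarrow> \<exists>m. F \<subseteq> D m"
proof (induction F rule: finite_induct)
  case (insert x F)
  then obtain m j where "F \<subseteq> D m" "x \<in> D j" by auto
  then have "insert x F \<subseteq> D (max m j)"
    using monoD[OF mono_D, of m "max m j"] monoD[OF mono_D, of j "max m j"] by auto
  then show ?case ..
qed simp

lemma constants_in_stage:
  assumes "over AP \<Sigma>"
  obtains m \<phi> where "\<And>e c. e \<in> fset \<Sigma> \<Longrightarrow> c \<in> eqn_consts e \<Longrightarrow> \<phi> c \<in> C m \<and> E_union `` \<phi> c = c"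
proof -
  define Ks where "Ks = (\<Union>e\<in>fset \<Sigma>. eqn_consts e)"
  have "\<forall>c\<in>Ks. \<exists>d. d \<in> D_union \<and> c = E_union `` {d}"
  proof
    fix c assume "c \<in> Ks"
    then have "c \<in> D_union // E_union"
      using assms by (auto simp: Ks_def over_def ext_carrier_eq)
    then show "\<exists>d. d \<in> D_union \<and> c = E_union `` {d}"
      by (elim quotientE) blast
  qed
  then obtain r where r: "\<And>c. c \<in> Ks \<Longrightarrow> r c \<in> D_union \<and> c = E_union `` {r c}"
    by metis
  have "finite Ks" unfolding Ks_def by simp
  then obtain m where m: "r ` Ks \<subseteq> D m"
    using finite_subset_stage[of "r ` Ks"] r by blast
  show thesis
  proof (rule that[of "\<lambda>c. E m `` {r c}" m])
    fix e c assume "e \<in> fset \<Sigma>" "c \<in> eqn_consts e"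
    then have c: "c \<in> Ks" by (auto simp: Ks_def)
    then have "r c \<in> D m" using m by blast
    then show "E m `` {r c} \<in> C m \<and> E_union `` (E m `` {r c}) = c"
      using r[OF c] by (simp add: quotientI ext_class_stage_class)
  qed
qed

text \<open>A system over A(P) only involves finitely many constants, all of which come from some stage m;
  read over C m it is consistent, so the generators adjoined at stage m + 1 solve it.\<close>
theorem pure_wrt_ext: "pure_wrt P AP actAP"
  unfolding pure_wrt_def
proof (intro allI impI, elim conjE)
  fix \<Sigma> assume ov: "over AP \<Sigma>" and "P (nvars \<Sigma>)"
    and co: "consistent AP actAP \<Sigma>"
  obtain \<phi> m where \<phi>: "\<And>e c. e \<in> fset \<Sigma> \<Longrightarrow> c \<in> eqn_consts e \<Longrightarrow> \<phi> c \<in> C m \<and> E_union `` \<phi> c = c"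
    using constants_in_stage[OF ov] by metis
  define \<Gamma> where "\<Gamma> = fimage (eqn_map \<phi>) \<Sigma>"
  have unmap: "fimage (eqn_map (\<lambda>c. E_union `` c)) \<Gamma> = \<Sigma>"
    unfolding \<Gamma>_def fimage_eqn_map_comp by (rule fimage_eqn_map_id) (simp add: \<phi>)
  have "\<Gamma> \<in> Th m"
    unfolding Th_def
  proof (intro CollectI conjI)
    show "over (C m) \<Gamma>" using \<phi> by (auto simp: \<Gamma>_def over_map)
    show "consistent (C m) (actC m) \<Gamma>"
      using consistent_restrict[OF is_act_C stage_embedding] co unmap by simp
    show "P (nvars \<Gamma>)" using \<open>P (nvars \<Sigma>)\<close> by (simp add: \<Gamma>_def)
  qed
  from generators_solve[OF this] obtain \<tau> where \<tau>: "\<forall>k\<in>vars_of \<Sigma>. \<tau> k \<in> AP"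
    "solves actAP ((\<lambda>c. E_union `` c) \<circ> \<phi>) \<tau> \<Sigma>"
    by (auto simp: \<Gamma>_def solves_map)
  have "solves actAP id \<tau> \<Sigma>"
    using \<tau>(2) \<phi> by (subst solves_cong[where F' = "(\<lambda>c. E_union `` c) \<circ> \<phi>"]) auto
  with \<tau>(1) show "\<exists>\<sigma>. (\<forall>k\<in>vars_of \<Sigma>. \<sigma> k \<in> AP) \<and> solves actAP id \<sigma> \<Sigma>"
    by (intro exI[of _ \<tau>] conjI)
qed

section \<open>The retraction onto a P-pure act\<close>

definition sol :: "('a, 's) eqn fset \<Rightarrow> nat \<Rightarrow> 'a" where
  "sol \<Sigma> = (SOME \<sigma>. (\<forall>k\<in>vars_of \<Sigma>. \<sigma> k \<in> A) \<and> solves act id \<sigma> \<Sigma>)"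

text \<open>The retraction on stage i: a generator adjoined at stage i is sent to the chosen solution in A
  of its system, transported to A along the retraction of stage i - 1.  Elements outside D i are
  mapped to junk values.\<close>
primrec retr :: "nat \<Rightarrow> ('a, 's) elt \<Rightarrow> 'a" where
  "retr 0 = (\<lambda>d. case d of Base a \<Rightarrow> a | Gen _ _ _ _ \<Rightarrow> undefined)"
| "retr (Suc i) = (\<lambda>d. case d of Base a \<Rightarrow> a | Gen j T k s \<Rightarrow>
      (if j = Suc i then act (sol (fimage (eqn_map (retr i)) T) k) s else retr i d))"

declare retr.simps [simp del]

definition retr_sys :: "nat \<Rightarrow> (('a, 's) elt set, 's) eqn fset \<Rightarrow> ('a, 's) eqn fset" where
  "retr_sys i \<Sigma> = fimage (eqn_map (retr i \<circ> rep)) \<Sigma>"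

lemma retr_Base: "retr i (Base a) = a"
  by (cases i) (simp_all add: retr.simps)

lemma retr_Suc_old: "d \<in> D i \<Longrightarrow> retr (Suc i) d = retr i d"
  using stage_inv[of i] by (cases d) (auto simp: stage_inv_def retr_Base retr.simps)

lemma retr_Suc_new: "retr (Suc i) (Gen (Suc i) (tag \<Sigma>) k s) = act (sol (retr_sys i \<Sigma>) k) s"
  by (simp only: retr.simps elt.case retr_sys_def tag_def fimage_eqn_map_comp) simp

definition retr_compat :: "nat \<Rightarrow> bool" where
  "retr_compat i \<longleftrightarrow> (\<forall>d\<in>D i. retr i d \<in> A) \<and> (\<forall>x y. (x, y) \<in> E i \<longrightarrow> retr i x = retr i y)
     \<and> (\<forall>d\<in>D i. \<forall>s. retr i (ract act d s) = act (retr i d) s)"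

lemma retr_compat_0: "retr_compat 0"
  using is_act_A by (auto simp: retr_compat_def D_0 E_0 is_act_def retr_Base)

lemma retr_quotient_morph:
  assumes "retr_compat i"
  shows "is_morph (C i) (actC i) A act (retr i \<circ> rep)"
  unfolding is_morph_def
proof (intro conjI ballI allI)
  fix c s assume c: "c \<in> C i"
  then have r: "rep c \<in> D i" "E i `` {rep c} = c" using rep_class[OF quot_stage] by auto
  then show "(retr i \<circ> rep) c \<in> A" using assms by (simp add: retr_compat_def)
  have "actC i c s = E i `` {ract act (rep c) s}"
    using qact_class[OF quot_stage r(1)] r(2) by simp
  moreover have "actC i c s \<in> C i" using is_actD(1)[OF is_act_C c] .
  ultimately have "(ract act (rep c) s, rep (actC i c s)) \<in> E i"
    using rep_class(1)[OF quot_stage] by fastforce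
  moreover have "retr i x = retr i y" if "(x, y) \<in> E i" for x y
    using assms that by (simp add: retr_compat_def)
  moreover have "retr i (ract act (rep c) s) = act (retr i (rep c)) s"
    using assms r(1) by (simp add: retr_compat_def)
  ultimately show "(retr i \<circ> rep) (actC i c s) = act ((retr i \<circ> rep) c) s"
    by simp
qed

lemma sol_retr_sys:
  assumes pure: "pure_wrt P A act" and "retr_compat i" and \<Sigma>: "\<Sigma> \<in> Th i"
  shows "k \<in> vars_of \<Sigma> \<Longrightarrow> sol (retr_sys i \<Sigma>) k \<in> A"
    and "solves act id (sol (retr_sys i \<Sigma>)) (retr_sys i \<Sigma>)"
proof -
  note g = retr_quotient_morph[OF assms(2)]
  have "over A (retr_sys i \<Sigma>)"
    using \<Sigma> g by (auto simp: retr_sys_def over_map Th_def over_def is_morph_def)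
  moreover have "consistent A act (retr_sys i \<Sigma>)"
    unfolding retr_sys_def using \<Sigma> consistent_map_morph[OF is_act_C is_act_A g] by (simp add: Th_def)
  moreover have "P (nvars (retr_sys i \<Sigma>))" using \<Sigma> by (simp add: retr_sys_def Th_def)
  ultimately have "\<exists>\<sigma>. (\<forall>k\<in>vars_of (retr_sys i \<Sigma>). \<sigma> k \<in> A) \<and> solves act id \<sigma> (retr_sys i \<Sigma>)"
    using pure by (simp add: pure_wrt_def)
  then have "(\<forall>k\<in>vars_of (retr_sys i \<Sigma>). sol (retr_sys i \<Sigma>) k \<in> A)
      \<and> solves act id (sol (retr_sys i \<Sigma>)) (retr_sys i \<Sigma>)"
    unfolding sol_def by (rule someI_ex)
  then show "k \<in> vars_of \<Sigma> \<Longrightarrow> sol (retr_sys i \<Sigma>) k \<in> A"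
    and "solves act id (sol (retr_sys i \<Sigma>)) (retr_sys i \<Sigma>)"
    unfolding retr_sys_def vars_of_map by auto
qed

lemma retr_Suc_EqVV:
  assumes "pure_wrt P A act" "retr_compat i" "\<Sigma> \<in> Th i" "EqVV a u b v \<in> fset \<Sigma>"
  shows "retr (Suc i) (Gen (Suc i) (tag \<Sigma>) a u) = retr (Suc i) (Gen (Suc i) (tag \<Sigma>) b v)"
proof -
  have "EqVV a u b v \<in> fset (retr_sys i \<Sigma>)" unfolding retr_sys_def EqVV_in_map by (rule assms(4))
  then show ?thesis
    using sol_retr_sys(2)[OF assms(1-3)] unfolding solves_iff by (simp add: retr_Suc_new)
qed

lemma retr_Suc_EqVC:
  assumes "pure_wrt P A act" "retr_compat i" "\<Sigma> \<in> Th i" "EqVC a u c \<in> fset \<Sigma>"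
  shows "retr (Suc i) (Gen (Suc i) (tag \<Sigma>) a u) = retr (Suc i) (rep c)"
proof -
  have "rep c \<in> D i"
    using assms(3,4) rep_class(2)[OF quot_stage] by (auto simp: Th_def dest: over_EqVC)
  moreover have "EqVC a u ((retr i \<circ> rep) c) \<in> fset (retr_sys i \<Sigma>)"
    unfolding retr_sys_def EqVC_in_map using assms(4) by auto
  ultimately show ?thesis
    using sol_retr_sys(2)[OF assms(1-3)] unfolding solves_iff by (simp add: retr_Suc_new retr_Suc_old)
qed

lemma retr_compat_Suc:
  assumes pure: "pure_wrt P A act" and IH: "retr_compat i"
  shows "retr_compat (Suc i)"
proof -
  have old: "retr (Suc i) d = retr i d" "retr i d \<in> A" if "d \<in> D i" for d
    using that retr_Suc_old IH by (auto simp: retr_compat_def)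
  have new: "retr (Suc i) x \<in> A \<and> (\<forall>s. retr (Suc i) (ract act x s) = act (retr (Suc i) x) s)"
    if "x \<in> N i" for x
  proof -
    obtain \<Sigma> k u where "x = Gen (Suc i) (tag \<Sigma>) k u" "\<Sigma> \<in> Th i" "k \<in> vars_of \<Sigma>"
      using \<open>x \<in> N i\<close> by (rule N_cases)
    then show ?thesis
      using sol_retr_sys(1)[OF pure IH] is_act_A by (simp add: retr_Suc_new is_actD)
  qed
  have in_A: "\<forall>d\<in>D (Suc i). retr (Suc i) d \<in> A"
    using old new by (auto simp: D_Suc)
  have hom: "\<forall>x\<in>D (Suc i). \<forall>s. retr (Suc i) (ract act x s) = act (retr (Suc i) x) s"
    using old new IH raw_quotient_closed[OF quot_stage] by (auto simp: D_Suc retr_compat_def)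
  have "retr (Suc i) x = retr (Suc i) y" if "(x, y) \<in> E (Suc i)" for x y
  proof (rule E_Suc_kernel[OF hom _ _ _ that])
    show "retr (Suc i) x = retr (Suc i) y" if "(x, y) \<in> E i" for x y
      using that IH raw_quotient_in[OF quot_stage] by (simp add: old retr_compat_def)
  qed (use retr_Suc_EqVV[OF pure IH] retr_Suc_EqVC[OF pure IH] in auto)
  then show ?thesis
    using in_A hom by (simp add: retr_compat_def)
qed

lemma retr_compat: "pure_wrt P A act \<Longrightarrow> retr_compat i"
  by (induction i) (use retr_compat_0 retr_compat_Suc in auto)

lemma retr_mono: "d \<in> D i \<Longrightarrow> i \<le> j \<Longrightarrow> retr j d = retr i d"
proof (induction j)
  case (Suc j)
  show ?case
  proof (cases "i = Suc j")
    case False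
    then have "i \<le> j" using Suc by simp
    moreover have "d \<in> D j" using calculation Suc.prems(1) monoD[OF mono_D] by blast
    ultimately show ?thesis using Suc.IH Suc.prems(1) retr_Suc_old by simp
  qed simp
qed simp

definition retr_lim :: "('a, 's) elt \<Rightarrow> 'a" where
  "retr_lim d = retr (LEAST i. d \<in> D i) d"

lemma retr_lim_eq: "d \<in> D i \<Longrightarrow> retr_lim d = retr i d"
proof -
  assume d: "d \<in> D i"
  have "d \<in> D (LEAST i. d \<in> D i)" "(LEAST i. d \<in> D i) \<le> i"
    using d by (auto intro: LeastI Least_le)
  from retr_mono[OF this] show ?thesis unfolding retr_lim_def by simp
qed

lemma retr_lim_rep:
  assumes pure: "pure_wrt P A act" and X: "X \<in> AP" and d: "d \<in> X" "d \<in> D i"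
  shows "retr_lim (rep X) = retr i d"
proof -
  have XU: "X \<in> D_union // E_union" using X by (simp add: ext_carrier_eq)
  have "d \<in> E_union `` {rep X}" using rep_class(3)[OF quot_union XU] d(1) by simp
  then obtain j where j: "(rep X, d) \<in> E j" by blast
  then have "rep X \<in> D j" "d \<in> D j" using raw_quotient_in[OF quot_stage] by auto
  have "retr_lim (rep X) = retr j (rep X)" using retr_lim_eq \<open>rep X \<in> D j\<close> by simp
  also have "\<dots> = retr j d" using j retr_compat[OF pure] by (simp add: retr_compat_def)
  also have "\<dots> = retr i d" using retr_lim_eq[OF \<open>d \<in> D j\<close>] retr_lim_eq[OF d(2)] by simp
  finally show ?thesis .
qed

theorem retract_ext:
  assumes pure: "pure_wrt P A act"
  shows "is_retract A act AP actAP embAP"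
  unfolding is_retract_def is_morph_def
proof (intro exI[of _ "\<lambda>X. retr_lim (rep X)"] conjI ballI allI)
  have compat: "retr_compat i" for i using retr_compat[OF pure] .
  fix X s assume X: "X \<in> AP"
  then have "rep X \<in> X" "rep X \<in> D_union"
    using rep_class[OF quot_union] by (auto simp: ext_carrier_eq)
  then obtain i where d: "rep X \<in> X" "rep X \<in> D i" by blast
  then show "retr_lim (rep X) \<in> A" using retr_lim_rep[OF pure X] compat by (simp add: retr_compat_def)
  have "actAP X s = qact E_union (ract act) (E_union `` {rep X}) s"
    using rep_class(3)[OF quot_union] X by (simp add: ext_act_eq ext_carrier_eq)
  also have "\<dots> = E_union `` {ract act (rep X) s}"
    using qact_class[OF quot_union] \<open>rep X \<in> D_union\<close> by simp
  finally have "actAP X s = E_union `` {ract act (rep X) s}" .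
  moreover have rd: "ract act (rep X) s \<in> D i" using raw_quotient_closed[OF quot_stage d(2)] .
  moreover have "(ract act (rep X) s, ract act (rep X) s) \<in> E_union"
    using raw_quotient_refl[OF quot_stage rd] by blast
  ultimately have "ract act (rep X) s \<in> actAP X s" by simp
  then have "retr_lim (rep (actAP X s)) = retr i (ract act (rep X) s)"
    using retr_lim_rep[OF pure is_actD(1)[OF is_act_ext X] _ rd] by blast
  then show "retr_lim (rep (actAP X s)) = act (retr_lim (rep X)) s"
    using retr_lim_rep[OF pure X d] compat d(2) by (simp add: retr_compat_def)
next
  fix a assume a: "a \<in> A"
  then have b: "Base a \<in> D 0" by (simp add: D_0)
  then have "Base a \<in> embAP a"
    using raw_quotient_refl[OF quot_stage b] by (auto simp: ext_emb_def ext_rel_eq)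
  then show "retr_lim (rep (embAP a)) = a"
    using retr_lim_rep[OF pure is_morphD(1)[OF is_morph_ext_emb a] _ b] by (simp add: retr_Base)
qed

theorem ext_pure_and_retract:
  "pure_wrt P AP actAP
   \<and> (pure_wrt P A act \<longleftrightarrow> is_retract A act AP actAP embAP)"
  using pure_wrt_retract[OF is_act_A is_act_ext is_morph_ext_emb _ pure_wrt_ext]
  by (intro conjI iffI pure_wrt_ext retract_ext)

end

theorem mainTheorem16:
  fixes A :: "'a set" and act :: "'a \<Rightarrow> 's::monoid_mult \<Rightarrow> 'a"
  assumes "is_act A act"
  shows "(\<forall>n. n_abs_pure n (An_carrier n A act) (An_act n A act))
       \<and> abs_pure (Aw_carrier A act) (Aw_act A act)
       \<and> (\<forall>n. n_abs_pure n A act \<longleftrightarrow>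
              is_retract A act (An_carrier n A act) (An_act n A act) (An_emb n A act))
       \<and> (abs_pure A act \<longleftrightarrow> is_retract A act (Aw_carrier A act) (Aw_act A act) (Aw_emb A act))"
proof -
  have "extension A act" using assms by unfold_locales
  note ext = extension.ext_pure_and_retract[OF this]
  show ?thesis
    unfolding n_abs_pure_iff_pure_wrt abs_pure_iff_pure_wrt by (simp add: ext)
qed

end
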